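(* Let $p$ be a prime number, $n$ a positive integer and $Q\in\mathbb{Z}[X_1,\dots,X_n]$ a quadratic form. Then the set $R(\mathbb{N}\cap Q(\mathbb{Z}^n))$ is dense in $\mathbb{Q}_p$ if and only if $R(Q(\mathbb{Z}^n))$ is dense in $\mathbb{Q}_p$ and $\mathbb{N}_+\cap Q(\mathbb{Z}^n)\neq\varnothing$. Likewise, $R(\mathbb{N}\cap Q(\mathbb{N}^n))$ is dense in $\mathbb{Q}_p$ if and only if $R(Q(\mathbb{N}^n))$ is dense in $\mathbb{Q}_p$ and $\mathbb{N}_+\cap Q(\mathbb{N}^n)\neq\varnothing$.
   Context: $\mathbb{N}$ denotes the nonnegative integers and $\mathbb{N}_+$ the positive integers. A quadratic form is a homogeneous polynomial of degree two, not all coefficients zero. For a subset $A$ of a field, $R(A)=\{a/b: a,b\in A,\ b\neq 0\}$. For $S\subseteq\mathbb{Z}^n$, $Q(S)=\{Q(\mathbf{x}):\mathbf{x}\in S\}$. Density is with respect to the $p$-adic topology on $\mathbb{Q}_p$. *)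

theory Defs
  imports Complex_Main "HOL-Computational_Algebra.Computational_Algebra"
begin

definition padic_val :: "nat \<Rightarrow> rat \<Rightarrow> int" where
  "padic_val p r = (case quotient_of r of (a, b) \<Rightarrow>
      int (multiplicity (int p) a) - int (multiplicity (int p) b))"

definition padic_norm :: "nat \<Rightarrow> rat \<Rightarrow> real" where
  "padic_norm p r = (if r = 0 then 0 else real p powr (- real_of_int (padic_val p r)))"

text \<open>A set of rationals is dense in Q_p.  Since Q is dense in Q_p, this holds iff
  every rational is a p-adic limit of elements of the set.\<close>
definition padic_dense :: "nat \<Rightarrow> rat set \<Rightarrow> bool" where
  "padic_dense p A \<longleftrightarrow> (\<forall>x::rat. \<forall>\<epsilon>>0. \<exists>a\<in>A. padic_norm p (a - x) < \<epsilon>)"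

definition ratio_set :: "int set \<Rightarrow> rat set" where
  "ratio_set A = {of_int a / of_int b | a b. a \<in> A \<and> b \<in> A \<and> b \<noteq> 0}"

definition qform :: "nat \<Rightarrow> (nat \<Rightarrow> nat \<Rightarrow> int) \<Rightarrow> (nat \<Rightarrow> int) \<Rightarrow> int" where
  "qform n c x = (\<Sum>j<n. \<Sum>i\<le>j. c i j * x i * x j)"

definition is_qform :: "nat \<Rightarrow> (nat \<Rightarrow> nat \<Rightarrow> int) \<Rightarrow> bool" where
  "is_qform n c \<longleftrightarrow> (\<exists>i j. i \<le> j \<and> j < n \<and> c i j \<noteq> 0)"

definition Zn :: "nat \<Rightarrow> (nat \<Rightarrow> int) set" where
  "Zn n = {x. \<forall>i\<ge>n. x i = 0}"

definition Nn :: "nat \<Rightarrow> (nat \<Rightarrow> int) set" where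
  "Nn n = {x. (\<forall>i\<ge>n. x i = 0) \<and> (\<forall>i<n. x i \<ge> 0)}"

end

theory Submission
  imports Defs
begin

text \<open>Let S be Z^n or N^n; both are closed under x + t y for t \<ge> 0. If Q(y) > 0, then
  Q(x + t y) = Q(x) + t B(x, y) + t^2 Q(y) is positive for large t, and congruent to Q(x)
  modulo p^K when p^K divides t. So every value of Q on S is p-adically approximated by
  positive values, and a ratio a/b is approximated by ratios a'/b' with a' \<equiv> a, b' \<equiv> b
  (mod p^K), which are p-adically close to a/b once K exceeds twice the valuation of b.\<close>

lemma prime_int_not_unit: "prime p \<Longrightarrow> \<not> is_unit (int p)"
  by (auto dest: not_prime_unit)

lemma multiplicity_add_ge_min:
  fixes a b :: int
  assumes "prime p" "a + b \<noteq> 0"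
  shows "multiplicity (int p) (a + b) \<ge> min (multiplicity (int p) a) (multiplicity (int p) b)"
proof -
  let ?m = "min (multiplicity (int p) a) (multiplicity (int p) b)"
  have "int p ^ ?m dvd a" "int p ^ ?m dvd b" by (auto intro: multiplicity_dvd')
  then have "int p ^ ?m dvd a + b" by simp
  then show ?thesis using assms prime_int_not_unit multiplicity_geI by blast
qed

lemma multiplicity_le_if_dvd_diff:
  fixes b b' :: int
  assumes "prime p" "b \<noteq> 0" "int p ^ K dvd b' - b" "multiplicity (int p) b < K"
  shows "multiplicity (int p) b' \<le> multiplicity (int p) b"
proof (rule ccontr)
  let ?m = "Suc (multiplicity (int p) b)"
  assume "\<not> ?thesis"
  then have "int p ^ ?m dvd b'" by (intro multiplicity_dvd') simp
  moreover have "int p ^ ?m dvd int p ^ K" using assms(4) by (intro le_imp_power_dvd) simp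
  then have "int p ^ ?m dvd b' - b" using assms(3) by (rule dvd_trans)
  ultimately have "int p ^ ?m dvd b' - (b' - b)" by (rule dvd_diff)
  then have "?m \<le> multiplicity (int p) b"
    using multiplicity_geI[OF assms(2) prime_int_not_unit[OF assms(1)]] by simp
  then show False by simp
qed

lemma padic_val_of_int_div:
  assumes "prime p" "a \<noteq> 0" "b \<noteq> 0"
  shows "padic_val p (of_int a / of_int b) =
           int (multiplicity (int p) a) - int (multiplicity (int p) b)"
proof -
  obtain a' b' where q: "quotient_of (of_int a / of_int b) = (a', b')"
    by (cases "quotient_of (of_int a / of_int b)")
  have b': "b' > 0" using quotient_of_denom_pos[OF q] .
  have "(of_int a / of_int b :: rat) = of_int a' / of_int b'" using quotient_of_div[OF q] .
  then have "(of_int (a * b') :: rat) = of_int (a' * b)" using b' assms by (simp add: field_simps)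
  then have cross: "a * b' = a' * b" by (simp only: of_int_eq_iff)
  then have "a' \<noteq> 0" using assms b' by auto
  have "prime_elem (int p)" using assms by simp
  moreover have "multiplicity (int p) (a * b') = multiplicity (int p) (a' * b)" using cross by simp
  ultimately have "multiplicity (int p) a + multiplicity (int p) b' =
                   multiplicity (int p) a' + multiplicity (int p) b"
    using assms b' \<open>a' \<noteq> 0\<close> by (simp add: prime_elem_multiplicity_mult_distrib)
  then show ?thesis unfolding padic_val_def q by simp
qed

lemma padic_val_add_ge_min:
  assumes "prime p" "r \<noteq> 0" "s \<noteq> 0" "r + s \<noteq> 0"
  shows "padic_val p (r + s) \<ge> min (padic_val p r) (padic_val p s)"
proof -
  obtain a b where "quotient_of r = (a, b)" by (cases "quotient_of r")
  then have b: "b > 0" and r: "r = of_int a / of_int b"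
    by (auto intro: quotient_of_denom_pos quotient_of_div)
  obtain a' b' where "quotient_of s = (a', b')" by (cases "quotient_of s")
  then have b': "b' > 0" and s: "s = of_int a' / of_int b'"
    by (auto intro: quotient_of_denom_pos quotient_of_div)
  have a: "a \<noteq> 0" "a' \<noteq> 0" using assms r s by auto
  have sum: "r + s = of_int (a * b' + a' * b) / of_int (b * b')"
    using r s b b' by (simp add: field_simps)
  then have num: "a * b' + a' * b \<noteq> 0" using assms(4) by (metis div_0 of_int_0)
  let ?M = "multiplicity (int p)"
  have "prime_elem (int p)" using assms by simp
  then have M: "?M (a * b') = ?M a + ?M b'" "?M (a' * b) = ?M a' + ?M b" "?M (b * b') = ?M b + ?M b'"
    using a b b' by (auto intro: prime_elem_multiplicity_mult_distrib)
  have "?M (a * b' + a' * b) \<ge> min (?M (a * b')) (?M (a' * b))"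
    using multiplicity_add_ge_min[OF assms(1) num] .
  moreover have "padic_val p (r + s) = int (?M (a * b' + a' * b)) - int (?M (b * b'))"
    unfolding sum by (rule padic_val_of_int_div[OF assms(1) num]) (use b b' in simp)
  moreover have "padic_val p r = int (?M a) - int (?M b)" "padic_val p s = int (?M a') - int (?M b')"
    using padic_val_of_int_div[OF assms(1)] a b b' r s by auto
  ultimately show ?thesis using M by linarith
qed

lemma padic_norm_nonneg: "padic_norm p r \<ge> 0"
  unfolding padic_norm_def by simp

lemma padic_norm_add_le_max:
  assumes "prime p"
  shows "padic_norm p (r + s) \<le> max (padic_norm p r) (padic_norm p s)"
proof (cases "r = 0 \<or> s = 0 \<or> r + s = 0")
  case True
  then show ?thesis by (auto simp: padic_norm_nonneg le_max_iff_disj padic_norm_def[of p 0])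
next
  case False
  then have "padic_val p (r + s) \<ge> min (padic_val p r) (padic_val p s)"
    using padic_val_add_ge_min[OF assms] by auto
  moreover have "real p > 1" using assms prime_gt_1_nat by simp
  ultimately show ?thesis using False
    by (auto simp: padic_norm_def min_def max_def split: if_splits)
qed

lemma padic_norm_of_int_div_le:
  assumes "prime p" "b \<noteq> 0" "int p ^ K dvd a"
  shows "padic_norm p (of_int a / of_int b) \<le>
           real p powr - (real K - real (multiplicity (int p) b))"
proof (cases "a = 0")
  case True
  then show ?thesis by (simp add: padic_norm_def)
next
  case False
  have "multiplicity (int p) a \<ge> K"
    using multiplicity_geI[OF False prime_int_not_unit[OF assms(1)] assms(3)] .
  then have "padic_val p (of_int a / of_int b) \<ge> int K - int (multiplicity (int p) b)"
    using padic_val_of_int_div[OF assms(1) False assms(2)] by simp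
  moreover have "real p > 1" using assms prime_gt_1_nat by simp
  ultimately show ?thesis using False assms(2)
    by (auto simp: padic_norm_def intro!: powr_mono)
qed

lemma padic_norm_ratio_diff_le:
  assumes "prime p" "b \<noteq> 0" "b' \<noteq> 0"
    and "int p ^ K dvd a' - a" "int p ^ K dvd b' - b"
    and "multiplicity (int p) b < K"
  shows "padic_norm p (of_int a' / of_int b' - of_int a / of_int b) \<le>
           real p powr - (real K - 2 * real (multiplicity (int p) b))"
proof -
  let ?M = "multiplicity (int p)"
  have "(of_int a' / of_int b' - of_int a / of_int b :: rat) =
        of_int ((a' - a) * b - a * (b' - b)) / of_int (b * b')"
    using assms(2,3) by (simp add: field_simps)
  also have "padic_norm p \<dots> \<le> real p powr - (real K - real (?M (b * b')))"
    using assms by (intro padic_norm_of_int_div_le) auto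
  also have "\<dots> \<le> real p powr - (real K - 2 * real (?M b))"
  proof -
    have "?M (b * b') = ?M b + ?M b'"
      using assms by (simp add: prime_elem_multiplicity_mult_distrib)
    moreover have "?M b' \<le> ?M b" using multiplicity_le_if_dvd_diff assms by blast
    moreover have "real p \<ge> 1" using prime_ge_1_nat[OF assms(1)] by simp
    ultimately show ?thesis by (intro powr_mono) auto
  qed
  finally show ?thesis .
qed

lemma ratio_set_mono: "A \<subseteq> B \<Longrightarrow> ratio_set A \<subseteq> ratio_set B"
  unfolding ratio_set_def by blast

lemma ratio_set_eq_empty_iff: "ratio_set A = {} \<longleftrightarrow> A \<subseteq> {0}"
  unfolding ratio_set_def by blast

lemma padic_dense_mono: "padic_dense p A \<Longrightarrow> A \<subseteq> B \<Longrightarrow> padic_dense p B"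
  unfolding padic_dense_def by blast

lemma padic_dense_imp_nonempty: "padic_dense p A \<Longrightarrow> A \<noteq> {}"
  unfolding padic_dense_def by (metis empty_iff zero_less_one)

lemma padic_dense_ratio_set_transfer:
  assumes "prime p" "padic_dense p (ratio_set A)"
    and approx: "\<And>a K. a \<in> A \<Longrightarrow> \<exists>a'\<in>B. a' \<noteq> 0 \<and> int p ^ K dvd a' - a"
  shows "padic_dense p (ratio_set B)"
  unfolding padic_dense_def
proof (intro allI impI)
  fix t :: rat and \<epsilon> :: real
  assume "\<epsilon> > 0"
  then obtain a b where ab: "a \<in> A" "b \<in> A" "b \<noteq> 0"
    and close: "padic_norm p (of_int a / of_int b - t) < \<epsilon>"
    using assms(2) unfolding padic_dense_def ratio_set_def by blast
  have p: "real p > 1" using assms prime_gt_1_nat by simp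
  obtain k where k: "inverse \<epsilon> < real p ^ k" using real_arch_pow[OF p] by blast
  define K where "K = k + 2 * multiplicity (int p) b + 1"
  obtain a' where a': "a' \<in> B" "int p ^ K dvd a' - a" using approx ab(1) by blast
  obtain b' where b': "b' \<in> B" "b' \<noteq> 0" "int p ^ K dvd b' - b" using approx ab(2) by blast
  have "padic_norm p (of_int a' / of_int b' - of_int a / of_int b) \<le> real p powr - real (k + 1)"
    using padic_norm_ratio_diff_le[OF assms(1) ab(3) b'(2) a'(2) b'(3)] by (simp add: K_def)
  also have "\<dots> < real p powr - real k" using p by (intro powr_less_mono) auto
  also have "\<dots> = inverse (real p ^ k)" using p by (simp add: powr_minus powr_realpow)
  also have "\<dots> < \<epsilon>" using k \<open>\<epsilon> > 0\<close> by (simp add: inverse_less_imp_less)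
  finally have ratio_close: "padic_norm p (of_int a' / of_int b' - of_int a / of_int b) < \<epsilon>" .
  have "padic_norm p (of_int a' / of_int b' - t) =
        padic_norm p ((of_int a / of_int b - t) + (of_int a' / of_int b' - of_int a / of_int b))"
    by simp
  also have "\<dots> \<le> max (padic_norm p (of_int a / of_int b - t))
                    (padic_norm p (of_int a' / of_int b' - of_int a / of_int b))"
    by (rule padic_norm_add_le_max[OF assms(1)])
  also have "\<dots> < \<epsilon>" using close ratio_close by simp
  finally have "padic_norm p (of_int a' / of_int b' - t) < \<epsilon>" .
  moreover have "of_int a' / of_int b' \<in> ratio_set B" using a' b' unfolding ratio_set_def by auto
  ultimately show "\<exists>q\<in>ratio_set B. padic_norm p (q - t) < \<epsilon>" by (intro bexI)
qed

lemma quadratic_pos_large: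
  fixes a b c t :: int
  assumes "c > 0" "t \<ge> \<bar>a\<bar> + \<bar>b\<bar> + 1"
  shows "a + t * b + t^2 * c > 0"
proof -
  have "t * (\<bar>a\<bar> + \<bar>b\<bar> + 1) \<le> t * t" using assms by (intro mult_left_mono) auto
  also have "\<dots> \<le> t^2 * c" using assms mult_left_mono[of 1 c "t * t"] by (simp add: power2_eq_square)
  finally have "t^2 * c \<ge> t * \<bar>a\<bar> + t * \<bar>b\<bar> + t" by (simp add: algebra_simps)
  moreover have "t * \<bar>a\<bar> \<ge> \<bar>a\<bar>" using assms mult_right_mono[of 1 t "\<bar>a\<bar>"] by simp
  moreover have "t * \<bar>b\<bar> = \<bar>t * b\<bar>" using assms by (simp add: abs_mult)
  ultimately show ?thesis using assms by linarith
qed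

definition qform_polar :: "nat \<Rightarrow> (nat \<Rightarrow> nat \<Rightarrow> int) \<Rightarrow> (nat \<Rightarrow> int) \<Rightarrow> (nat \<Rightarrow> int) \<Rightarrow> int" where
  "qform_polar n c x y = (\<Sum>j<n. \<Sum>i\<le>j. c i j * (x i * y j + y i * x j))"

lemma qform_add_smult:
  "qform n c (\<lambda>i. x i + t * y i) = qform n c x + t * qform_polar n c x y + t^2 * qform n c y"
proof -
  have expand: "\<And>i j. c i j * (x i + t * y i) * (x j + t * y j) =
     c i j * x i * x j + t * (c i j * (x i * y j + y i * x j)) + t^2 * (c i j * y i * y j)"
    by (simp add: algebra_simps power2_eq_square)
  show ?thesis
    unfolding qform_def qform_polar_def expand sum.distrib sum_distrib_left ..
qed

lemma qform_add_smult_cong: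
  "d dvd t \<Longrightarrow> d dvd qform n c (\<lambda>i. x i + t * y i) - qform n c x"
  unfolding qform_add_smult by (simp add: power2_eq_square)

lemma qform_add_smult_pos:
  assumes "qform n c y > 0" "d > 0"
  shows "\<exists>t\<ge>0. d dvd t \<and> qform n c (\<lambda>i. x i + t * y i) > 0"
proof -
  define t where "t = d * (\<bar>qform n c x\<bar> + \<bar>qform_polar n c x y\<bar> + 1)"
  have "t \<ge> \<bar>qform n c x\<bar> + \<bar>qform_polar n c x y\<bar> + 1"
    unfolding t_def using assms(2) mult_right_mono[of 1 d] by (simp add: add_nonneg_pos)
  then have "qform n c (\<lambda>i. x i + t * y i) > 0"
    unfolding qform_add_smult by (rule quadratic_pos_large[OF assms(1)])
  moreover have "t \<ge> 0" "d dvd t" using assms(2) by (simp_all add: t_def)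
  ultimately show ?thesis by blast
qed

lemma padic_dense_ratio_set_nonneg_qform_iff:
  assumes "prime p"
    and closed: "\<And>x y t. x \<in> S \<Longrightarrow> y \<in> S \<Longrightarrow> t \<ge> 0 \<Longrightarrow> (\<lambda>i. x i + t * y i) \<in> S"
  shows "padic_dense p (ratio_set {v \<in> qform n c ` S. v \<ge> 0}) \<longleftrightarrow>
           padic_dense p (ratio_set (qform n c ` S)) \<and> (\<exists>v \<in> qform n c ` S. v > 0)"
proof
  assume dense: "padic_dense p (ratio_set {v \<in> qform n c ` S. v \<ge> 0})"
  then have "padic_dense p (ratio_set (qform n c ` S))"
    by (rule padic_dense_mono[OF _ ratio_set_mono]) blast
  moreover have "\<not> {v \<in> qform n c ` S. v \<ge> 0} \<subseteq> {0}"
    using padic_dense_imp_nonempty[OF dense] ratio_set_eq_empty_iff by blast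
  then have "\<exists>v \<in> qform n c ` S. v > 0" by force
  ultimately show "padic_dense p (ratio_set (qform n c ` S)) \<and> (\<exists>v \<in> qform n c ` S. v > 0)" ..
next
  assume "padic_dense p (ratio_set (qform n c ` S)) \<and> (\<exists>v \<in> qform n c ` S. v > 0)"
  then obtain y where dense: "padic_dense p (ratio_set (qform n c ` S))"
    and y: "y \<in> S" "qform n c y > 0" by blast
  show "padic_dense p (ratio_set {v \<in> qform n c ` S. v \<ge> 0})"
  proof (rule padic_dense_ratio_set_transfer[OF assms(1) dense])
    fix a K
    assume "a \<in> qform n c ` S"
    then obtain x where x: "x \<in> S" "a = qform n c x" by blast
    have "int p ^ K > 0" using assms(1) prime_gt_0_nat by simp
    then obtain t where "t \<ge> 0" "int p ^ K dvd t" "qform n c (\<lambda>i. x i + t * y i) > 0"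
      using qform_add_smult_pos y(2) by blast
    then show "\<exists>a'\<in>{v \<in> qform n c ` S. v \<ge> 0}. a' \<noteq> 0 \<and> int p ^ K dvd a' - a"
      using closed[OF x(1) y(1)] x(2) qform_add_smult_cong
      by (intro bexI[of _ "qform n c (\<lambda>i. x i + t * y i)"]) auto
  qed
qed

theorem theorem2:
  fixes p n :: nat and c :: "nat \<Rightarrow> nat \<Rightarrow> int"
  assumes "prime p" and "n \<ge> 1" and "is_qform n c"
  shows "(padic_dense p (ratio_set {v \<in> qform n c ` Zn n. v \<ge> 0})
            \<longleftrightarrow> padic_dense p (ratio_set (qform n c ` Zn n))
                \<and> (\<exists>v \<in> qform n c ` Zn n. v > 0))
       \<and> (padic_dense p (ratio_set {v \<in> qform n c ` Nn n. v \<ge> 0})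
            \<longleftrightarrow> padic_dense p (ratio_set (qform n c ` Nn n))
                \<and> (\<exists>v \<in> qform n c ` Nn n. v > 0))"
  using padic_dense_ratio_set_nonneg_qform_iff[OF assms(1), of "Zn n" n c]
        padic_dense_ratio_set_nonneg_qform_iff[OF assms(1), of "Nn n" n c]
  by (auto simp: Zn_def Nn_def)

end
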